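(* Consider any economy (in the setting described in the context, so in particular every market $\mathcal{M}(\theta)$, $\theta\in\Theta$, has a unique stable matching). Then there exists a Bayesian Nash equilibrium with truthfully reporting firms, in which every worker uses a weakly undominated strategy, whose outcome in each state $\theta$ is the unique stable matching (for the true preferences) of $\mathcal{M}(\theta)$.
   Context: Matching market: $\mathcal{M}=(F,W,U)$ with finite firms $F=\{f_i\}_{i\in[m]}$, finite workers $W=\{w_j\}_{j\in[n]}$, and utilities $u^f_{ij}$ (firm $f_i$ from worker $w_j$) and $u^w_{ij}$ (worker $w_j$ from firm $f_i$); being unmatched gives utility $0$; all preferences are strict and all firm–worker pairs are mutually acceptable (all match utilities are $>0$). A matching is stable if no agent is matched to an unacceptable partner and no firm–worker pair both strictly prefer each other to their assigned partners. An economy is $\mathcal{E}=(F,W,\{U(\theta)\}_{\theta\in\Theta},\Theta,\Psi)$ with finite state set $\Theta$, full-support prior $\Psi$, and market $\mathcal{M}(\theta)=(F,W,U(\theta))$ in state $\theta$; workers' utilities do not depend on the state ($u^w_{ij}(\theta)=u^w_{ij}(\theta')$ for all $\theta,\theta'$), while firms' utilities may. Standing assumption: each market $\mathcal{M}(\theta)$ has a unique stable matching. Game: a state $\theta$ is drawn according to $\Psi$; firms observe $\theta$ (and their utilities in $\theta$); each worker knows only his own (state-independent) preferences. All agents simultaneously submit rank-ordered lists of partners they declare acceptable, and the firm-proposing Deferred Acceptance algorithm is run on the reported lists. Firms are assumed to report truthfully; a worker's strategy is a single rank-ordered list, and a Bayesian Nash equilibrium (BNE) is a profile in which each worker's list maximizes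 his expected utility (under $\Psi$) given the others' strategies. A worker's strategy is weakly dominated if another list gives him weakly higher utility in every state against every profile of others' reports and strictly higher utility in some case. The outcome of a BNE is the matching it produces in each state. *)

theory Defs
  imports Complex_Main
begin

type_synonym ('w, 'f) matching = "'w \<Rightarrow> 'f option"

definition is_matching :: "('w, 'f) matching \<Rightarrow> bool" where
  "is_matching \<mu> \<longleftrightarrow> (\<forall>j j' i. \<mu> j = Some i \<and> \<mu> j' = Some i \<longrightarrow> j = j')"

definition wutil :: "('f \<Rightarrow> 'w \<Rightarrow> real) \<Rightarrow> ('w, 'f) matching \<Rightarrow> 'w \<Rightarrow> real" where
  "wutil uw \<mu> j = (case \<mu> j of None \<Rightarrow> 0 | Some i \<Rightarrow> uw i j)"

definition futil :: "('f \<Rightarrow> 'w \<Rightarrow> real) \<Rightarrow> ('w, 'f) matching \<Rightarrow> 'f \<Rightarrow> real" where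
  "futil uf \<mu> i = (if \<exists>j. \<mu> j = Some i then uf i (THE j. \<mu> j = Some i) else 0)"

definition stable :: "('f \<Rightarrow> 'w \<Rightarrow> real) \<Rightarrow> ('f \<Rightarrow> 'w \<Rightarrow> real) \<Rightarrow> ('w, 'f) matching \<Rightarrow> bool" where
  "stable uf uw \<mu> \<longleftrightarrow> is_matching \<mu>
     \<and> (\<forall>j i. \<mu> j = Some i \<longrightarrow> uw i j > 0 \<and> uf i j > 0)
     \<and> \<not> (\<exists>i j. futil uf \<mu> i < uf i j \<and> wutil uw \<mu> j < uw i j)"

text \<open>PF i: firm i's reported list (best first); PW j: worker j's reported list
(best first; the firms on it are those declared acceptable). The DA state k
records, for each firm, how many entries of its list it has been rejected by;
firm i currently proposes to PF i ! k i if k i < length (PF i).\<close>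

definition proposes :: "('f \<Rightarrow> 'w list) \<Rightarrow> ('f \<Rightarrow> nat) \<Rightarrow> 'f \<Rightarrow> 'w \<Rightarrow> bool" where
  "proposes PF k i j \<longleftrightarrow> k i < length (PF i) \<and> PF i ! k i = j"

definition held :: "('f \<Rightarrow> 'w list) \<Rightarrow> ('w \<Rightarrow> 'f list) \<Rightarrow> ('f \<Rightarrow> nat) \<Rightarrow> 'w \<Rightarrow> 'f option" where
  "held PF PW k j = find (\<lambda>i. proposes PF k i j) (PW j)"

definition rejected :: "('f \<Rightarrow> 'w list) \<Rightarrow> ('w \<Rightarrow> 'f list) \<Rightarrow> ('f \<Rightarrow> nat) \<Rightarrow> 'f \<Rightarrow> bool" where
  "rejected PF PW k i \<longleftrightarrow> k i < length (PF i) \<and> held PF PW k (PF i ! k i) \<noteq> Some i"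

definition da_step :: "('f \<Rightarrow> 'w list) \<Rightarrow> ('w \<Rightarrow> 'f list) \<Rightarrow> ('f \<Rightarrow> nat) \<Rightarrow> ('f \<Rightarrow> nat)" where
  "da_step PF PW k = (\<lambda>i. if rejected PF PW k i then Suc (k i) else k i)"

text \<open>Each non-terminal round strictly increases the bounded quantity
sum of min (k i) (length (PF i)), so after (sum of list lengths) rounds the algorithm
has terminated (further rounds change nothing).\<close>
definition da_final :: "('f::finite \<Rightarrow> 'w list) \<Rightarrow> ('w \<Rightarrow> 'f list) \<Rightarrow> ('f \<Rightarrow> nat)" where
  "da_final PF PW = (da_step PF PW ^^ (\<Sum>i\<in>UNIV. length (PF i))) (\<lambda>_. 0)"

definition DA :: "('f::finite \<Rightarrow> 'w list) \<Rightarrow> ('w \<Rightarrow> 'f list) \<Rightarrow> ('w, 'f) matching" where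
  "DA PF PW = held PF PW (da_final PF PW)"

definition firm_truth :: "('f \<Rightarrow> 'w::finite \<Rightarrow> real) \<Rightarrow> 'f \<Rightarrow> 'w list" where
  "firm_truth uf i = (SOME L. distinct L \<and> set L = UNIV \<and> sorted_wrt (\<lambda>a b. uf i a > uf i b) L)"

definition valid_profile :: "('w \<Rightarrow> 'f list) \<Rightarrow> bool" where
  "valid_profile \<sigma> \<longleftrightarrow> (\<forall>j. distinct (\<sigma> j))"

definition outcome :: "('th \<Rightarrow> 'f::finite \<Rightarrow> 'w::finite \<Rightarrow> real) \<Rightarrow> ('w \<Rightarrow> 'f list) \<Rightarrow> 'th \<Rightarrow> ('w, 'f) matching" where
  "outcome uf \<sigma> th = DA (firm_truth (uf th)) \<sigma>"

definition exp_util :: "('th::finite \<Rightarrow> 'f::finite \<Rightarrow> 'w::finite \<Rightarrow> real) \<Rightarrow> ('f \<Rightarrow> 'w \<Rightarrow> real)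
    \<Rightarrow> ('th \<Rightarrow> real) \<Rightarrow> ('w \<Rightarrow> 'f list) \<Rightarrow> 'w \<Rightarrow> real" where
  "exp_util uf uw Psi \<sigma> j = (\<Sum>th\<in>UNIV. Psi th * wutil uw (outcome uf \<sigma> th) j)"

definition is_BNE :: "('th::finite \<Rightarrow> 'f::finite \<Rightarrow> 'w::finite \<Rightarrow> real) \<Rightarrow> ('f \<Rightarrow> 'w \<Rightarrow> real)
    \<Rightarrow> ('th \<Rightarrow> real) \<Rightarrow> ('w \<Rightarrow> 'f list) \<Rightarrow> bool" where
  "is_BNE uf uw Psi \<sigma> \<longleftrightarrow> valid_profile \<sigma> \<and>
     (\<forall>j L. distinct L \<longrightarrow> exp_util uf uw Psi (\<sigma>(j := L)) j \<le> exp_util uf uw Psi \<sigma> j)"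

definition weakly_dominated :: "('th::finite \<Rightarrow> 'f::finite \<Rightarrow> 'w::finite \<Rightarrow> real) \<Rightarrow> ('f \<Rightarrow> 'w \<Rightarrow> real)
    \<Rightarrow> 'w \<Rightarrow> 'f list \<Rightarrow> bool" where
  "weakly_dominated uf uw j L \<longleftrightarrow> (\<exists>L'. distinct L' \<and>
     (\<forall>th \<sigma>. valid_profile \<sigma> \<longrightarrow>
        wutil uw (outcome uf (\<sigma>(j := L)) th) j \<le> wutil uw (outcome uf (\<sigma>(j := L')) th) j) \<and>
     (\<exists>th \<sigma>. valid_profile \<sigma> \<and>
        wutil uw (outcome uf (\<sigma>(j := L)) th) j < wutil uw (outcome uf (\<sigma>(j := L')) th) j))"

end

theory Submission
  imports Defs
begin

text \<open>The equilibrium is truth-telling by all workers.  Firm-proposing deferred acceptance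
  on true lists yields the firm-optimal stable matching, which by uniqueness is also the
  worker-optimal one.  If a worker gained by a misreport, the blocking lemma of Gale and
  Sotomayor would give a pair blocking the manipulated outcome whose worker does not gain;
  this worker reports truthfully, so the pair also blocks the outcome with respect to the
  reports, which deferred acceptance never produces.

  Truth-telling is not weakly dominated either.  Suppose a report \<open>L\<close> does at least as
  well against every profile of the others, and strictly better against \<open>\<sigma>\<^sub>0\<close>.  Letting
  the others accept only their partners in one of the two outcomes against \<open>\<sigma>\<^sub>0\<close> and
  comparing the worker's two reports there shows that each outcome stays stable with
  respect to the worker's other report.  Firm optimality of deferred acceptance then gives
  every firm the same utility in both outcomes, so the worker has the same partner.\<close>

section \<open>Deferred acceptance on rank-ordered lists\<close>

fun rank :: "'a list \<Rightarrow> 'a \<Rightarrow> nat" where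
  "rank [] x = 0"
| "rank (y # ys) x = (if y = x then 0 else Suc (rank ys x))"

lemma rank_less_length: "x \<in> set xs \<Longrightarrow> rank xs x < length xs"
  by (induction xs) auto

lemma nth_rank: "x \<in> set xs \<Longrightarrow> xs ! rank xs x = x"
  by (induction xs) auto

lemma rank_nth: "distinct xs \<Longrightarrow> i < length xs \<Longrightarrow> rank xs (xs ! i) = i"
  by (induction xs arbitrary: i) (auto simp: nth_Cons' nth_mem)

lemma rank_eq_iff: "x \<in> set xs \<Longrightarrow> y \<in> set xs \<Longrightarrow> rank xs x = rank xs y \<longleftrightarrow> x = y"
  by (metis nth_rank)

lemma find_SomeD: "List.find P xs = Some x \<Longrightarrow> x \<in> set xs \<and> P x"
  by (induction xs) (auto split: if_splits)

lemma rank_find_le: "List.find P xs = Some x \<Longrightarrow> y \<in> set xs \<Longrightarrow> P y \<Longrightarrow> rank xs x \<le> rank xs y"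
  by (induction xs) (auto split: if_splits)

lemma rank_less_iff_sorted_wrt:
  fixes K :: "'a \<Rightarrow> 'b::linorder"
  assumes sorted: "sorted_wrt (\<lambda>a b. K a > K b) xs" and "a \<in> set xs" "b \<in> set xs"
  shows "rank xs a < rank xs b \<longleftrightarrow> K b < K a"
proof -
  have key: "K y < K x" if "rank xs x < rank xs y" "x \<in> set xs" "y \<in> set xs" for x y
    using sorted_wrt_nth_less[OF sorted that(1) rank_less_length[OF that(3)]]
    by (simp add: nth_rank that(2,3))
  show ?thesis
    using key[of a b] key[of b a] rank_eq_iff[of a xs b] assms(2,3)
    by (metis linorder_neqE_nat not_less_iff_gr_or_eq)
qed

definition da_round :: "('p \<Rightarrow> 'r list) \<Rightarrow> ('r \<Rightarrow> 'p list) \<Rightarrow> nat \<Rightarrow> 'p \<Rightarrow> nat" where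
  "da_round PP PR s = (da_step PP PR ^^ s) (\<lambda>_. 0)"

lemma da_round_0 [simp]: "da_round PP PR 0 p = 0"
  by (simp add: da_round_def)

lemma da_round_Suc: "da_round PP PR (Suc s) = da_step PP PR (da_round PP PR s)"
  by (simp add: da_round_def)

lemma da_round_Suc_apply:
  "da_round PP PR (Suc s) p =
     (if rejected PP PR (da_round PP PR s) p then Suc (da_round PP PR s p) else da_round PP PR s p)"
  by (simp add: da_round_Suc da_step_def)

lemma da_round_le_length: "da_round PP PR s p \<le> length (PP p)"
  by (induction s) (auto simp: da_round_Suc_apply rejected_def)

lemma da_round_mono: "s \<le> s' \<Longrightarrow> da_round PP PR s p \<le> da_round PP PR s' p"
  by (rule lift_Suc_mono_le[of "\<lambda>s. da_round PP PR s p"]) (simp_all add: da_round_Suc_apply)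

lemma da_final_eq_da_round: "da_final PP PR = da_round PP PR (\<Sum>p\<in>UNIV. length (PP p))"
  by (simp add: da_final_def da_round_def)

lemma da_round_progress:
  fixes PP :: "'p::finite \<Rightarrow> 'r list"
  shows "rejected PP PR (da_round PP PR s) p \<Longrightarrow> s \<le> (\<Sum>q\<in>UNIV. da_round PP PR s q)"
proof (induction s arbitrary: p)
  case 0
  then show ?case by simp
next
  case (Suc s)
  have "\<exists>q. rejected PP PR (da_round PP PR s) q"
  proof (rule ccontr)
    assume "\<nexists>q. rejected PP PR (da_round PP PR s) q"
    then have "da_round PP PR (Suc s) = da_round PP PR s"
      by (simp add: da_round_Suc da_step_def)
    then show False
      using Suc.prems \<open>\<nexists>q. _\<close> by simp
  qed
  then obtain q where q: "rejected PP PR (da_round PP PR s) q" ..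
  have "(\<Sum>q\<in>UNIV. da_round PP PR s q) < (\<Sum>q\<in>UNIV. da_round PP PR (Suc s) q)"
    by (rule sum_strict_mono_ex1) (use q in \<open>auto simp: da_round_Suc_apply\<close>)
  with Suc.IH[OF q] show ?case
    by simp
qed

lemma da_final_not_rejected:
  fixes PP :: "'p::finite \<Rightarrow> 'r list"
  shows "\<not> rejected PP PR (da_final PP PR) p"
proof
  define N where "N = (\<Sum>q\<in>UNIV. length (PP q))"
  assume "rejected PP PR (da_final PP PR) p"
  then have rej: "rejected PP PR (da_round PP PR N) p"
    by (simp add: da_final_eq_da_round N_def)
  have "(\<Sum>q\<in>UNIV. da_round PP PR N q) < (\<Sum>q\<in>UNIV. length (PP q))"
    by (rule sum_strict_mono_ex1) (use rej in \<open>auto simp: da_round_le_length rejected_def\<close>)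
  with da_round_progress[OF rej] N_def show False
    by linarith
qed

lemma da_round_le_da_final:
  fixes PP :: "'p::finite \<Rightarrow> 'r list"
  shows "da_round PP PR s p \<le> da_final PP PR p"
proof -
  define N where "N = (\<Sum>q\<in>UNIV. length (PP q))"
  have "da_step PP PR (da_round PP PR N) = da_round PP PR N"
    using da_final_not_rejected[of PP PR]
    by (simp add: da_step_def da_final_eq_da_round N_def)
  then have "da_round PP PR (N + n) = da_round PP PR N" for n
    by (induction n) (simp_all add: da_round_Suc)
  then have "da_round PP PR s p \<le> da_round PP PR N p"
    by (metis da_round_mono le_add1 le_add_diff_inverse nat_le_linear)
  then show ?thesis
    by (simp add: da_final_eq_da_round N_def)
qed

lemma da_final_le_length: "da_final PP PR p \<le> length (PP p)"
  by (simp add: da_final_eq_da_round da_round_le_length)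

lemma held_SomeD: "held PP PR k r = Some p \<Longrightarrow> proposes PP k p r \<and> p \<in> set (PR r)"
  unfolding held_def using find_SomeD by fastforce

lemma rank_held_le:
  "held PP PR k r = Some x \<Longrightarrow> p \<in> set (PR r) \<Longrightarrow> proposes PP k p r \<Longrightarrow> rank (PR r) x \<le> rank (PR r) p"
  unfolding held_def using rank_find_le by fastforce

lemma held_exists: "p \<in> set (PR r) \<Longrightarrow> proposes PP k p r \<Longrightarrow> \<exists>x. held PP PR k r = Some x"
  unfolding held_def by (metis find_None_iff option.exhaust)

lemma held_not_rejected: "held PP PR k r = Some p \<Longrightarrow> \<not> rejected PP PR k p"
  using held_SomeD unfolding rejected_def proposes_def by fastforce

lemma held_da_step:
  assumes "held PP PR k r = Some x"
  shows "\<exists>y. held PP PR (da_step PP PR k) r = Some y \<and> rank (PR r) y \<le> rank (PR r) x"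
proof -
  have "da_step PP PR k x = k x"
    using held_not_rejected[OF assms] by (simp add: da_step_def)
  then have x: "proposes PP (da_step PP PR k) x r" "x \<in> set (PR r)"
    using held_SomeD[OF assms] by (auto simp: proposes_def)
  with held_exists rank_held_le show ?thesis
    by metis
qed

definition rejected_for_better :: "('p \<Rightarrow> 'r list) \<Rightarrow> ('r \<Rightarrow> 'p list) \<Rightarrow> ('p \<Rightarrow> nat) \<Rightarrow> bool" where
  "rejected_for_better PP PR k \<longleftrightarrow> (\<forall>p q. q < k p \<longrightarrow> p \<in> set (PR (PP p ! q)) \<longrightarrow>
     (\<exists>x. held PP PR k (PP p ! q) = Some x \<and> rank (PR (PP p ! q)) x < rank (PR (PP p ! q)) p))"

lemma held_better_before_da_step:
  assumes inv: "rejected_for_better PP PR k"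
    and q: "q < da_step PP PR k p" and p: "p \<in> set (PR (PP p ! q))"
  shows "\<exists>x. held PP PR k (PP p ! q) = Some x \<and> rank (PR (PP p ! q)) x < rank (PR (PP p ! q)) p"
proof (cases "q < k p")
  case True
  with inv p show ?thesis
    unfolding rejected_for_better_def by blast
next
  case False
  with q have "rejected PP PR k p" "q = k p"
    by (auto simp: da_step_def split: if_splits)
  then have proposing: "proposes PP k p (PP p ! q)" and not_held: "held PP PR k (PP p ! q) \<noteq> Some p"
    by (auto simp: rejected_def proposes_def)
  obtain x where x: "held PP PR k (PP p ! q) = Some x"
    using held_exists[of p PR "PP p ! q" PP k] p proposing by blast
  have "rank (PR (PP p ! q)) x \<noteq> rank (PR (PP p ! q)) p"
    using rank_eq_iff[OF _ p] held_SomeD[OF x] x not_held by auto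
  with rank_held_le[OF x p proposing] x show ?thesis
    by auto
qed

lemma rejected_for_better_da_round: "rejected_for_better PP PR (da_round PP PR s)"
proof (induction s)
  case 0
  then show ?case by (simp add: rejected_for_better_def)
next
  case (Suc s)
  show ?case
    unfolding rejected_for_better_def da_round_Suc
  proof (intro allI impI)
    fix p q
    assume "q < da_step PP PR (da_round PP PR s) p" "p \<in> set (PR (PP p ! q))"
    from held_better_before_da_step[OF Suc this] held_da_step
    show "\<exists>x. held PP PR (da_step PP PR (da_round PP PR s)) (PP p ! q) = Some x
            \<and> rank (PR (PP p ! q)) x < rank (PR (PP p ! q)) p"
      by (meson le_less_trans)
  qed
qed

lemma DA_SomeD:
  "DA PP PR r = Some p \<Longrightarrow> da_final PP PR p < length (PP p) \<and> PP p ! da_final PP PR p = r \<and> p \<in> set (PR r)"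
  unfolding DA_def using held_SomeD proposes_def by fastforce

lemma DA_final_proposal:
  fixes PP :: "'p::finite \<Rightarrow> 'r list"
  shows "da_final PP PR p < length (PP p) \<Longrightarrow> DA PP PR (PP p ! da_final PP PR p) = Some p"
  using da_final_not_rejected[of PP PR p] unfolding DA_def rejected_def by auto

lemma DA_rejected_for_better:
  "q < da_final PP PR p \<Longrightarrow> p \<in> set (PR (PP p ! q)) \<Longrightarrow>
    \<exists>x. DA PP PR (PP p ! q) = Some x \<and> rank (PR (PP p ! q)) x < rank (PR (PP p ! q)) p"
  using rejected_for_better_da_round[of PP PR] unfolding DA_def rejected_for_better_def da_final_eq_da_round
  by blast

lemma is_matching_DA: "is_matching (DA PP PR)"
  unfolding is_matching_def using DA_SomeD by metis

definition list_stable :: "('p \<Rightarrow> 'r list) \<Rightarrow> ('r \<Rightarrow> 'p list) \<Rightarrow> ('r, 'p) matching \<Rightarrow> bool" where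
  "list_stable PP PR m \<longleftrightarrow> is_matching m
    \<and> (\<forall>r p. m r = Some p \<longrightarrow> r \<in> set (PP p) \<and> p \<in> set (PR r))
    \<and> (\<forall>p r. r \<in> set (PP p) \<longrightarrow> p \<in> set (PR r) \<longrightarrow>
          (\<forall>r'. m r' = Some p \<longrightarrow> rank (PP p) r < rank (PP p) r') \<longrightarrow>
          (\<exists>x. m r = Some x \<and> rank (PR r) x < rank (PR r) p))"

lemma list_stable_DA:
  fixes PP :: "'p::finite \<Rightarrow> 'r list"
  assumes dist: "\<And>p. distinct (PP p)"
  shows "list_stable PP PR (DA PP PR)"
proof -
  have "\<exists>x. DA PP PR r = Some x \<and> rank (PR r) x < rank (PR r) p"
    if r: "r \<in> set (PP p)" and p: "p \<in> set (PR r)"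
      and better: "\<forall>r'. DA PP PR r' = Some p \<longrightarrow> rank (PP p) r < rank (PP p) r'" for p r
  proof -
    have "rank (PP p) r < da_final PP PR p"
    proof (cases "da_final PP PR p < length (PP p)")
      case True
      then show ?thesis
        using better DA_final_proposal rank_nth[OF dist True] by metis
    next
      case False
      then show ?thesis
        using rank_less_length[OF r] by simp
    qed
    from DA_rejected_for_better[OF this] show ?thesis
      using p by (simp add: nth_rank[OF r])
  qed
  moreover have "r \<in> set (PP p) \<and> p \<in> set (PR r)" if "DA PP PR r = Some p" for r p
    using DA_SomeD[OF that] by (metis nth_mem)
  ultimately show ?thesis
    unfolding list_stable_def using is_matching_DA by blast
qed

lemma list_stable_acceptable: "list_stable PP PR m \<Longrightarrow> m r = Some p \<Longrightarrow> r \<in> set (PP p) \<and> p \<in> set (PR r)"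
  unfolding list_stable_def by blast

lemma list_stable_no_blocking:
  "list_stable PP PR m \<Longrightarrow> r \<in> set (PP p) \<Longrightarrow> p \<in> set (PR r) \<Longrightarrow>
    (\<And>r'. m r' = Some p \<Longrightarrow> rank (PP p) r < rank (PP p) r') \<Longrightarrow>
    \<exists>x. m r = Some x \<and> rank (PR r) x < rank (PR r) p"
  unfolding list_stable_def by blast

lemma list_stable_partner_never_rejects:
  assumes dist: "\<And>p. distinct (PP p)" and st: "list_stable PP PR m"
  shows "q < da_round PP PR s p \<Longrightarrow> m (PP p ! q) \<noteq> Some p"
proof (induction s arbitrary: p q)
  case 0
  then show ?case by simp
next
  case (Suc s)
  let ?k = "da_round PP PR s" and ?r = "PP p ! q"
  show ?case
  proof
    assume m_r: "m ?r = Some p"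
    then have "p \<in> set (PR ?r)"
      using list_stable_acceptable[OF st] by blast
    moreover have "q < da_step PP PR ?k p"
      using Suc.prems by (simp add: da_round_Suc)
    ultimately obtain x where x: "held PP PR ?k ?r = Some x" "rank (PR ?r) x < rank (PR ?r) p"
      using held_better_before_da_step[OF rejected_for_better_da_round[of PP PR s]] by blast
    then have "x \<noteq> p" by auto
    from held_SomeD[OF x(1)] have kx: "?k x < length (PP x)" "PP x ! ?k x = ?r"
      and x_in: "x \<in> set (PR ?r)"
      by (auto simp: proposes_def)
    have r_in: "?r \<in> set (PP x)"
      using kx by (metis nth_mem)
    have "rank (PP x) ?r < rank (PP x) r'" if m_r': "m r' = Some x" for r'
    proof -
      have r': "r' \<in> set (PP x)"
        using list_stable_acceptable[OF st m_r'] ..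
      have "\<not> rank (PP x) r' < ?k x"
        using Suc.IH[of "rank (PP x) r'" x] nth_rank[OF r'] m_r' by auto
      moreover have "r' \<noteq> ?r"
        using m_r m_r' \<open>x \<noteq> p\<close> by auto
      ultimately show ?thesis
        using rank_nth[OF dist kx(1)] kx(2) rank_eq_iff[OF r' r_in] by simp
    qed
    then obtain x' where "m ?r = Some x'" "rank (PR ?r) x' < rank (PR ?r) x"
      using list_stable_no_blocking[OF st r_in x_in] by blast
    with m_r x(2) show False
      by auto
  qed
qed

text \<open>Proposer optimality of deferred acceptance (Gale and Shapley).\<close>

lemma da_final_le_rank_stable_partner:
  fixes PP :: "'p::finite \<Rightarrow> 'r list"
  assumes dist: "\<And>p. distinct (PP p)" and st: "list_stable PP PR m" and m_r: "m r = Some p"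
  shows "da_final PP PR p \<le> rank (PP p) r"
proof (rule ccontr)
  assume "\<not> ?thesis"
  then have "rank (PP p) r < da_round PP PR (\<Sum>q\<in>UNIV. length (PP q)) p"
    by (simp add: da_final_eq_da_round)
  then have "m (PP p ! rank (PP p) r) \<noteq> Some p"
    by (rule list_stable_partner_never_rejects[OF dist st])
  moreover have "r \<in> set (PP p)"
    using list_stable_acceptable[OF st m_r] ..
  ultimately show False
    using m_r nth_rank by metis
qed

definition proposer_match :: "('p::finite \<Rightarrow> 'r list) \<Rightarrow> ('r \<Rightarrow> 'p list) \<Rightarrow> ('p, 'r) matching" where
  "proposer_match PP PR p =
     (if da_final PP PR p < length (PP p) then Some (PP p ! da_final PP PR p) else None)"

lemma DA_eq_Some_iff: "DA PP PR r = Some p \<longleftrightarrow> proposer_match PP PR p = Some r"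
proof
  assume "DA PP PR r = Some p"
  then show "proposer_match PP PR p = Some r"
    by (auto simp: proposer_match_def dest: DA_SomeD)
next
  assume "proposer_match PP PR p = Some r"
  then have "da_final PP PR p < length (PP p)" "PP p ! da_final PP PR p = r"
    by (auto simp: proposer_match_def split: if_splits)
  then show "DA PP PR r = Some p"
    using DA_final_proposal by blast
qed

definition arrival :: "('p::finite \<Rightarrow> 'r list) \<Rightarrow> ('r \<Rightarrow> 'p list) \<Rightarrow> 'p \<Rightarrow> nat" where
  "arrival PP PR p = (LEAST s. da_round PP PR s p = da_final PP PR p)"

lemma da_round_arrival: "da_round PP PR (arrival PP PR p) p = da_final PP PR p"
  unfolding arrival_def
  by (rule LeastI[of _ "\<Sum>q\<in>UNIV. length (PP q)"]) (simp add: da_final_eq_da_round)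

lemma da_round_before_arrival:
  assumes "s < arrival PP PR p"
  shows "da_round PP PR s p < da_final PP PR p"
proof -
  have "da_round PP PR s p \<noteq> da_final PP PR p"
    using assms unfolding arrival_def by (rule not_less_Least)
  with da_round_le_da_final[of PP PR s p] show ?thesis
    by simp
qed

lemma da_round_after_arrival:
  assumes "arrival PP PR p \<le> s"
  shows "da_round PP PR s p = da_final PP PR p"
  using da_round_mono[OF assms, of PP PR p] da_round_arrival[of PP PR p] da_round_le_da_final[of PP PR s p]
  by simp

text \<open>Just before \<open>w0\<close> arrives at \<open>f\<close>, the receiver \<open>f\<close> holds a proposer \<open>y\<close> it prefers
  to every proposer it has rejected so far; \<open>y\<close> is then displaced by \<open>w0\<close>.\<close>

lemma displaced_before_last_arrival:
  fixes PP :: "'p::finite \<Rightarrow> 'r list"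
  assumes dist: "\<And>p. distinct (PP p)"
    and w0: "proposer_match PP PR w0 = Some f"
    and p: "rank (PP p) f < da_round PP PR (arrival PP PR w0) p" "f \<in> set (PP p)" "p \<in> set (PR f)"
  shows "\<exists>y. rank (PR f) y < rank (PR f) p
    \<and> da_round PP PR (arrival PP PR w0) y < da_final PP PR y
    \<and> PP y ! da_round PP PR (arrival PP PR w0) y = f"
proof -
  obtain r where r: "arrival PP PR w0 = Suc r"
    using p(1) by (cases "arrival PP PR w0") auto
  let ?k = "da_round PP PR r"
  from held_better_before_da_step[OF rejected_for_better_da_round, of "rank (PP p) f" PP PR r p]
  obtain y where y: "held PP PR ?k f = Some y" "rank (PR f) y < rank (PR f) p"
    using p r by (auto simp: nth_rank da_round_Suc)
  have y_at_f: "?k y < length (PP y)" "PP y ! ?k y = f"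
    using held_SomeD[OF y(1)] by (auto simp: proposes_def)
  have y_stays: "da_round PP PR (Suc r) y = ?k y"
    using held_not_rejected[OF y(1)] by (simp add: da_round_Suc_apply)
  have w0_at_f: "da_final PP PR w0 < length (PP w0)" "PP w0 ! da_final PP PR w0 = f"
    using w0 by (auto simp: proposer_match_def split: if_splits)
  have "?k w0 < da_final PP PR w0"
    using da_round_before_arrival[of r PP PR w0] r by simp
  then have "y \<noteq> w0"
    using y_at_f w0_at_f nth_eq_iff_index_eq[OF dist[of w0], of "?k w0" "da_final PP PR w0"] by auto
  have "?k y < da_final PP PR y"
  proof -
    have "?k y \<noteq> da_final PP PR y"
    proof
      assume "?k y = da_final PP PR y"
      then have "proposer_match PP PR y = Some f"
        using y_at_f by (simp add: proposer_match_def)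
      then have "DA PP PR f = Some y" "DA PP PR f = Some w0"
        using w0 by (simp_all add: DA_eq_Some_iff)
      with \<open>y \<noteq> w0\<close> show False
        by simp
    qed
    then show ?thesis
      using da_round_le_da_final[of PP PR r y] by simp
  qed
  with y(2) y_at_f y_stays r show ?thesis
    by auto
qed

section \<open>Markets with truthful firms\<close>

lemma firm_truth_spec:
  fixes U :: "'f \<Rightarrow> 'w::finite \<Rightarrow> real"
  assumes "inj (U i)"
  shows "distinct (firm_truth U i) \<and> set (firm_truth U i) = UNIV
    \<and> sorted_wrt (\<lambda>a b. U i a > U i b) (firm_truth U i)"
  unfolding firm_truth_def
proof (rule someI_ex)
  obtain xs :: "'w list" where xs: "set xs = UNIV" "distinct xs"
    using finite_distinct_list[of "UNIV :: 'w set"] by auto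
  define L where "L = sort_key (\<lambda>a. - U i a) xs"
  have "sorted_wrt (\<lambda>a b. U i a > U i b) L"
    unfolding sorted_wrt_iff_nth_less
  proof (intro allI impI)
    fix m n assume mn: "m < n" "n < length L"
    have "U i (L ! n) \<le> U i (L ! m)"
      using sorted_nth_mono[of "map (\<lambda>a. - U i a) L" m n] mn by (simp add: L_def)
    moreover have "L ! m \<noteq> L ! n"
      using xs mn by (simp add: L_def nth_eq_iff_index_eq)
    then have "U i (L ! m) \<noteq> U i (L ! n)"
      using assms by (meson injD)
    ultimately show "U i (L ! m) > U i (L ! n)"
      by simp
  qed
  moreover have "distinct L" "set L = UNIV"
    using xs by (simp_all add: L_def)
  ultimately show "\<exists>L. distinct L \<and> set L = UNIV \<and> sorted_wrt (\<lambda>a b. U i a > U i b) L"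
    by blast
qed

definition worker_truth :: "('f::finite \<Rightarrow> 'w \<Rightarrow> real) \<Rightarrow> 'w \<Rightarrow> 'f list" where
  "worker_truth uw = firm_truth (\<lambda>j i. uw i j)"

lemma futil_Some:
  assumes "is_matching \<mu>" "\<mu> j = Some i"
  shows "futil U \<mu> i = U i j"
proof -
  have "(THE j. \<mu> j = Some i) = j"
    by (rule the_equality) (use assms in \<open>auto simp: is_matching_def\<close>)
  with assms(2) show ?thesis
    unfolding futil_def by auto
qed

lemma futil_unmatched: "(\<And>j. \<mu> j \<noteq> Some i) \<Longrightarrow> futil U \<mu> i = 0"
  unfolding futil_def by auto

definition report_stable :: "('f \<Rightarrow> 'w \<Rightarrow> real) \<Rightarrow> ('w \<Rightarrow> 'f list) \<Rightarrow> ('w, 'f) matching \<Rightarrow> bool" where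
  "report_stable uf PW \<mu> \<longleftrightarrow> is_matching \<mu> \<and> (\<forall>j i. \<mu> j = Some i \<longrightarrow> i \<in> set (PW j))
     \<and> (\<forall>i j. futil uf \<mu> i < uf i j \<longrightarrow> i \<in> set (PW j) \<longrightarrow>
          (\<exists>i'. \<mu> j = Some i' \<and> rank (PW j) i' < rank (PW j) i))"

lemma report_stable_acceptable: "report_stable uf PW \<mu> \<Longrightarrow> \<mu> j = Some i \<Longrightarrow> i \<in> set (PW j)"
  by (simp add: report_stable_def)

lemma report_stable_no_blocking:
  "report_stable uf PW \<mu> \<Longrightarrow> futil uf \<mu> i < uf i j \<Longrightarrow> i \<in> set (PW j) \<Longrightarrow>
    \<exists>i'. \<mu> j = Some i' \<and> rank (PW j) i' < rank (PW j) i"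
  by (simp add: report_stable_def)

definition singleton_reports :: "('w, 'f) matching \<Rightarrow> 'w \<Rightarrow> 'f list" where
  "singleton_reports \<mu> w = (case \<mu> w of None \<Rightarrow> [] | Some i \<Rightarrow> [i])"

lemma valid_profile_singleton_reports: "valid_profile (singleton_reports \<mu>)"
  unfolding valid_profile_def singleton_reports_def by (auto split: option.splits)

lemma set_singleton_reports: "set (singleton_reports \<mu> w) = {i. \<mu> w = Some i}"
  by (auto simp: singleton_reports_def split: option.splits)

locale market =
  fixes uf :: "'f::finite \<Rightarrow> 'w::finite \<Rightarrow> real" and uw :: "'f \<Rightarrow> 'w \<Rightarrow> real"
  assumes firm_inj: "inj (uf i)" and worker_inj: "inj (\<lambda>i. uw i j)"
    and firm_pos: "0 < uf i j" and worker_pos: "0 < uw i j"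
begin

lemma distinct_firm_truth: "distinct (firm_truth uf i)"
  using firm_truth_spec[of uf i, OF firm_inj] by blast

lemma set_firm_truth [simp]: "set (firm_truth uf i) = UNIV"
  using firm_truth_spec[of uf i, OF firm_inj] by blast

lemma rank_firm_truth_less_iff: "rank (firm_truth uf i) a < rank (firm_truth uf i) b \<longleftrightarrow> uf i b < uf i a"
  using rank_less_iff_sorted_wrt[of "uf i"] firm_truth_spec[of uf i, OF firm_inj] by blast

lemma distinct_worker_truth: "distinct (worker_truth uw j)"
  using firm_truth_spec[of "\<lambda>j i. uw i j", OF worker_inj] by (simp add: worker_truth_def)

lemma set_worker_truth [simp]: "set (worker_truth uw j) = UNIV"
  using firm_truth_spec[of "\<lambda>j i. uw i j", OF worker_inj] by (simp add: worker_truth_def)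

lemma rank_worker_truth_less_iff:
  "rank (worker_truth uw j) a < rank (worker_truth uw j) b \<longleftrightarrow> uw b j < uw a j"
  using rank_less_iff_sorted_wrt[of "\<lambda>i. uw i j"] firm_truth_spec[of "\<lambda>j i. uw i j", OF worker_inj]
  unfolding worker_truth_def by blast

lemma futil_less_iff:
  assumes "is_matching \<mu>"
  shows "futil uf \<mu> i < uf i j \<longleftrightarrow> (\<forall>j'. \<mu> j' = Some i \<longrightarrow> uf i j' < uf i j)"
proof (cases "\<exists>j'. \<mu> j' = Some i")
  case True
  then obtain j' where "\<mu> j' = Some i" ..
  with assms show ?thesis
    using futil_Some[OF assms] by (auto simp: is_matching_def)
next
  case False
  then show ?thesis
    using futil_unmatched[of \<mu> i uf] firm_pos[of i j] by auto
qed

lemma wutil_less_iff: "wutil uw \<mu> j < uw i j \<longleftrightarrow> (\<forall>i'. \<mu> j = Some i' \<longrightarrow> uw i' j < uw i j)"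
  using worker_pos by (cases "\<mu> j") (auto simp: wutil_def)

lemma futil_nonneg: "0 \<le> futil uf \<mu> i"
  using firm_pos by (simp add: futil_def less_imp_le)

lemma wutil_nonneg: "0 \<le> wutil uw \<mu> j"
  using worker_pos by (cases "\<mu> j") (auto simp: wutil_def less_imp_le)

lemma firm_util_eq_iff: "uf i a = uf i b \<longleftrightarrow> a = b"
  using firm_inj[of i] by (auto dest: injD)

lemma worker_util_eq_iff: "uw a j = uw b j \<longleftrightarrow> a = b"
  using worker_inj[of j] by (auto dest: injD)

lemma wutil_less_if_le: "wutil uw \<mu> j \<le> uw i j \<Longrightarrow> \<mu> j \<noteq> Some i \<Longrightarrow> wutil uw \<mu> j < uw i j"
  using worker_pos[of i j] by (cases "\<mu> j") (auto simp: wutil_def order_less_le worker_util_eq_iff)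

lemma rank_firm_truth_le_iff: "rank (firm_truth uf i) a \<le> rank (firm_truth uf i) b \<longleftrightarrow> uf i b \<le> uf i a"
  using rank_firm_truth_less_iff[of i b a] by linarith

lemma list_stable_firm_truth_iff: "list_stable (firm_truth uf) PW \<mu> \<longleftrightarrow> report_stable uf PW \<mu>"
proof
  assume st: "list_stable (firm_truth uf) PW \<mu>"
  then have matching: "is_matching \<mu>"
    by (simp add: list_stable_def)
  have "\<exists>i'. \<mu> j = Some i' \<and> rank (PW j) i' < rank (PW j) i"
    if "futil uf \<mu> i < uf i j" "i \<in> set (PW j)" for i j
    using list_stable_no_blocking[OF st _ that(2)] that(1)
    by (simp add: futil_less_iff[OF matching] rank_firm_truth_less_iff)
  with matching list_stable_acceptable[OF st] show "report_stable uf PW \<mu>"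
    unfolding report_stable_def by blast
next
  assume st: "report_stable uf PW \<mu>"
  then have matching: "is_matching \<mu>"
    by (simp add: report_stable_def)
  have "\<exists>x. \<mu> j = Some x \<and> rank (PW j) x < rank (PW j) i"
    if "i \<in> set (PW j)" "\<forall>j'. \<mu> j' = Some i \<longrightarrow> rank (firm_truth uf i) j < rank (firm_truth uf i) j'"
    for i j
    using report_stable_no_blocking[OF st _ that(1)] that(2)
    by (simp add: futil_less_iff[OF matching] rank_firm_truth_less_iff)
  with matching report_stable_acceptable[OF st] show "list_stable (firm_truth uf) PW \<mu>"
    unfolding list_stable_def by simp
qed

lemma report_stable_DA: "report_stable uf PW (DA (firm_truth uf) PW)"
proof -
  have "list_stable (firm_truth uf) PW (DA (firm_truth uf) PW)"
    by (rule list_stable_DA) (rule distinct_firm_truth)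
  then show ?thesis
    by (simp add: list_stable_firm_truth_iff)
qed

lemma DA_firm_optimal:
  assumes st: "report_stable uf PW \<mu>"
  shows "futil uf \<mu> i \<le> futil uf (DA (firm_truth uf) PW) i"
proof (cases "\<exists>j. \<mu> j = Some i")
  case False
  then show ?thesis
    using futil_unmatched[of \<mu> i uf] futil_nonneg by simp
next
  case True
  then obtain j where j: "\<mu> j = Some i" ..
  let ?k = "da_final (firm_truth uf) PW i"
  have "?k \<le> rank (firm_truth uf i) j"
    using da_final_le_rank_stable_partner[of "firm_truth uf" PW \<mu> j i] distinct_firm_truth st j
    by (simp add: list_stable_firm_truth_iff)
  moreover have k_less: "?k < length (firm_truth uf i)"
    using calculation rank_less_length[of j "firm_truth uf i"] by simp
  ultimately have "rank (firm_truth uf i) (firm_truth uf i ! ?k) \<le> rank (firm_truth uf i) j"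
    by (simp add: rank_nth[OF distinct_firm_truth k_less])
  then have "uf i j \<le> uf i (firm_truth uf i ! ?k)"
    by (simp add: rank_firm_truth_le_iff)
  moreover have "is_matching \<mu>"
    using st by (simp add: report_stable_def)
  ultimately show ?thesis
    using futil_Some[of \<mu> j i uf] j futil_Some[OF is_matching_DA DA_final_proposal[OF k_less]] by simp
qed

lemma report_stable_truthful_no_blocking:
  assumes "report_stable uf PW \<mu>" "PW j = worker_truth uw j"
  shows "\<not> (futil uf \<mu> i < uf i j \<and> wutil uw \<mu> j < uw i j)"
proof
  assume block: "futil uf \<mu> i < uf i j \<and> wutil uw \<mu> j < uw i j"
  then obtain i' where "\<mu> j = Some i'" "rank (worker_truth uw j) i' < rank (worker_truth uw j) i"
    using report_stable_no_blocking[OF assms(1)] assms(2) by fastforce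
  with block show False
    by (simp add: wutil_def rank_worker_truth_less_iff)
qed

lemma stable_if_report_stable_truthful: "report_stable uf (worker_truth uw) \<mu> \<Longrightarrow> stable uf uw \<mu>"
  using report_stable_truthful_no_blocking firm_pos worker_pos
  unfolding stable_def report_stable_def by blast

section \<open>Truthful reporting is a best response\<close>

abbreviation worker_proposing :: "('w, 'f) matching" where
  "worker_proposing \<equiv> proposer_match (worker_truth uw) (firm_truth uf)"

lemma stable_worker_proposing: "stable uf uw worker_proposing"
proof -
  let ?m = "DA (worker_truth uw) (firm_truth uf)"
  have st: "list_stable (worker_truth uw) (firm_truth uf) ?m"
    by (rule list_stable_DA[OF distinct_worker_truth])
  have matching: "is_matching worker_proposing"
    unfolding is_matching_def
  proof (intro allI impI)
    fix a b i
    assume "worker_proposing a = Some i \<and> worker_proposing b = Some i"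
    then have "?m i = Some a" "?m i = Some b"
      by (simp_all add: DA_eq_Some_iff)
    then show "a = b"
      by simp
  qed
  have "\<not> (futil uf worker_proposing i < uf i w \<and> wutil uw worker_proposing w < uw i w)" for i w
  proof
    assume block: "futil uf worker_proposing i < uf i w \<and> wutil uw worker_proposing w < uw i w"
    then have prefers: "rank (worker_truth uw w) i < rank (worker_truth uw w) i'" if "?m i' = Some w" for i'
      using that by (simp add: wutil_less_iff rank_worker_truth_less_iff DA_eq_Some_iff)
    have "\<exists>x. ?m i = Some x \<and> rank (firm_truth uf i) x < rank (firm_truth uf i) w"
      by (rule list_stable_no_blocking[OF st]) (simp_all add: prefers)
    then obtain x where "?m i = Some x" "rank (firm_truth uf i) x < rank (firm_truth uf i) w" 
      by blast
    with block show False
      using futil_Some[OF matching] by (simp add: DA_eq_Some_iff rank_firm_truth_less_iff)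
  qed
  with matching firm_pos worker_pos show ?thesis
    unfolding stable_def by blast
qed

lemma wutil_worker_proposing_less_iff:
  "wutil uw worker_proposing w < uw f w
    \<longleftrightarrow> rank (worker_truth uw w) f < da_final (worker_truth uw) (firm_truth uf) w"
proof (cases "da_final (worker_truth uw) (firm_truth uf) w < length (worker_truth uw w)")
  case True
  then show ?thesis
    using rank_nth[OF distinct_worker_truth True]
    by (simp add: proposer_match_def wutil_def rank_worker_truth_less_iff[symmetric])
next
  case False
  then show ?thesis
    using da_final_le_length[of "worker_truth uw" "firm_truth uf" w] worker_pos
      rank_less_length[of f "worker_truth uw w"]
    by (simp add: proposer_match_def wutil_def)
qed

lemma improver_partner_improves:
  assumes st: "stable uf uw \<mu>" and matching: "is_matching \<nu>"
    and no_block: "\<And>i y. wutil uw \<nu> y \<le> wutil uw \<mu> y \<Longrightarrow> \<not> (futil uf \<nu> i < uf i y \<and> wutil uw \<nu> y < uw i y)"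
    and w: "wutil uw \<mu> w < wutil uw \<nu> w" and f: "\<nu> w = Some f"
  shows "\<exists>w'. \<mu> w' = Some f \<and> wutil uw \<mu> w' < wutil uw \<nu> w'"
proof -
  have \<mu>_matching: "is_matching \<mu>"
    using st by (simp add: stable_def)
  have "wutil uw \<mu> w < uw f w"
    using w f by (simp add: wutil_def)
  with st have "\<not> futil uf \<mu> f < uf f w"
    unfolding stable_def by blast
  then obtain w' where w': "\<mu> w' = Some f" "\<not> uf f w' < uf f w"
    unfolding futil_less_iff[OF \<mu>_matching] by blast
  have "w' \<noteq> w"
    using w' \<open>wutil uw \<mu> w < uw f w\<close> by (auto simp: wutil_def)
  then have "uf f w \<noteq> uf f w'"
    by (simp add: firm_util_eq_iff)
  with w'(2) have f_prefers: "uf f w < uf f w'"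
    by linarith
  have "wutil uw \<mu> w' < wutil uw \<nu> w'"
  proof (rule ccontr)
    assume not_improved: "\<not> ?thesis"
    have "\<nu> w' \<noteq> Some f"
      using f \<open>w' \<noteq> w\<close> matching unfolding is_matching_def by blast
    with not_improved w'(1) have "wutil uw \<nu> w' < uw f w'"
      by (intro wutil_less_if_le) (simp_all add: wutil_def)
    moreover have "futil uf \<nu> f < uf f w'"
      using futil_Some[OF matching f] f_prefers by simp
    ultimately show False
      using no_block[of w' f] not_improved by simp
  qed
  with w' show ?thesis
    by blast
qed

lemma improvers_exchange_partners:
  assumes st: "stable uf uw \<mu>" and matching: "is_matching \<nu>"
    and no_block: "\<And>i y. wutil uw \<nu> y \<le> wutil uw \<mu> y \<Longrightarrow> \<not> (futil uf \<nu> i < uf i y \<and> wutil uw \<nu> y < uw i y)"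
  defines "W \<equiv> {w. wutil uw \<mu> w < wutil uw \<nu> w}"
  shows "\<nu> ` W = \<mu> ` W" and "w \<in> W \<Longrightarrow> \<nu> w \<noteq> None"
proof -
  show matched: "\<nu> w \<noteq> None" if "w \<in> W" for w
  proof
    assume "\<nu> w = None"
    then have "wutil uw \<nu> w = 0"
      by (simp add: wutil_def)
    with that wutil_nonneg[of \<mu> w] show False
      by (simp add: W_def)
  qed
  have "\<nu> w \<in> \<mu> ` W" if w: "w \<in> W" for w
  proof -
    obtain f where f: "\<nu> w = Some f"
      using matched[OF w] by blast
    then obtain w' where "\<mu> w' = Some f" "w' \<in> W"
      using improver_partner_improves[OF st matching no_block] w by (auto simp: W_def)
    with f show ?thesis
      by (metis imageI)
  qed
  then have sub: "\<nu> ` W \<subseteq> \<mu> ` W"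
    by blast
  have "inj_on \<nu> W"
  proof (rule inj_onI)
    fix a b assume "a \<in> W" "b \<in> W" "\<nu> a = \<nu> b"
    with matched matching show "a = b"
      unfolding is_matching_def by fastforce
  qed
  then have "card (\<mu> ` W) \<le> card (\<nu> ` W)"
    by (simp add: card_image card_image_le)
  moreover have "card (\<nu> ` W) \<le> card (\<mu> ` W)"
    by (rule card_mono) (simp_all add: sub)
  ultimately show "\<nu> ` W = \<mu> ` W"
    by (intro card_subset_eq[OF _ sub]) simp_all
qed

lemma worker_proposing_displaced:
  assumes w0: "worker_proposing w0 = Some f" and w: "wutil uw worker_proposing w < uw f w"
    and earlier: "arrival (worker_truth uw) (firm_truth uf) w \<le> arrival (worker_truth uw) (firm_truth uf) w0"
  shows "\<exists>y. uf f w < uf f y \<and> wutil uw worker_proposing y < uw f y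
    \<and> arrival (worker_truth uw) (firm_truth uf) w0 < arrival (worker_truth uw) (firm_truth uf) y"
proof -
  let ?WT = "worker_truth uw" and ?FT = "firm_truth uf"
  let ?r = "arrival ?WT ?FT w0"
  have "rank (?WT w) f < da_final ?WT ?FT w"
    using w by (simp flip: wutil_worker_proposing_less_iff)
  also have "\<dots> = da_round ?WT ?FT ?r w"
    using da_round_after_arrival[OF earlier] by simp
  finally obtain y where y: "rank (?FT f) y < rank (?FT f) w"
    "da_round ?WT ?FT ?r y < da_final ?WT ?FT y" "?WT y ! da_round ?WT ?FT ?r y = f"
    using displaced_before_last_arrival[OF distinct_worker_truth w0] by auto
  have "da_round ?WT ?FT ?r y < length (?WT y)"
    using y(2) da_final_le_length[of ?WT ?FT y] by simp
  then have "rank (?WT y) f < da_final ?WT ?FT y"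
    using y(2,3) rank_nth[OF distinct_worker_truth] by metis
  moreover have "?r < arrival ?WT ?FT y"
  proof (rule ccontr)
    assume "\<not> ?r < arrival ?WT ?FT y"
    then have "da_round ?WT ?FT ?r y = da_final ?WT ?FT y"
      by (intro da_round_after_arrival) simp
    with y(2) show False
      by simp
  qed
  ultimately show ?thesis
    using y(1) by (auto simp: rank_firm_truth_less_iff wutil_worker_proposing_less_iff)
qed

text \<open>The blocking lemma of Gale and Sotomayor.  The blocking firm is the final partner of
  the improving worker who is the last to reach his final partner in the worker-proposing
  algorithm.\<close>

lemma blocking_lemma:
  assumes matching: "is_matching \<nu>" and improver: "wutil uw worker_proposing j < wutil uw \<nu> j"
  shows "\<exists>i y. wutil uw \<nu> y \<le> wutil uw worker_proposing y \<and> futil uf \<nu> i < uf i y \<and> wutil uw \<nu> y < uw i y"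
proof (rule ccontr)
  let ?arrival = "arrival (worker_truth uw) (firm_truth uf)"
  define W where "W = {w. wutil uw worker_proposing w < wutil uw \<nu> w}"
  assume "\<not> ?thesis"
  then have no_block: "\<And>i y. wutil uw \<nu> y \<le> wutil uw worker_proposing y \<Longrightarrow>
      \<not> (futil uf \<nu> i < uf i y \<and> wutil uw \<nu> y < uw i y)"
    by blast
  note exchange = improvers_exchange_partners[OF stable_worker_proposing matching no_block, folded W_def]
  have "j \<in> W"
    using improver by (simp add: W_def)
  then have "Max (?arrival ` W) \<in> ?arrival ` W"
    by (intro Max_in) auto
  then obtain w0 where w0: "Max (?arrival ` W) = ?arrival w0" "w0 \<in> W"
    by (rule imageE)
  obtain w where w: "w \<in> W" "\<nu> w = worker_proposing w0"
    using exchange(1) w0(2) by (metis imageE imageI)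
  then obtain f where f: "worker_proposing w0 = Some f" "\<nu> w = Some f"
    using exchange(2) by fastforce
  have "wutil uw worker_proposing w < uw f w"
    using w(1) f(2) by (simp add: W_def wutil_def)
  moreover have "?arrival w \<le> ?arrival w0"
    using w(1) w0(1)[symmetric] by simp
  ultimately obtain y where y: "uf f w < uf f y" "wutil uw worker_proposing y < uw f y"
    "?arrival w0 < ?arrival y"
    using worker_proposing_displaced[OF f(1)] by blast
  have "y \<notin> W"
    using y(3) w0(1) by (metis Max_ge finite finite_imageI imageI leD)
  then have "wutil uw \<nu> y \<le> wutil uw worker_proposing y"
    by (simp add: W_def)
  moreover have "futil uf \<nu> f < uf f y"
    using y(1) futil_Some[OF matching f(2)] by simp
  ultimately show False
    using no_block y(2) by fastforce
qed

lemma truthful_report_optimal: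
  assumes unique: "\<exists>!\<mu>. stable uf uw \<mu>"
  shows "wutil uw (DA (firm_truth uf) ((worker_truth uw)(j := L))) j
    \<le> wutil uw (DA (firm_truth uf) (worker_truth uw)) j"
proof (rule ccontr)
  let ?\<nu> = "DA (firm_truth uf) ((worker_truth uw)(j := L))"
  have "DA (firm_truth uf) (worker_truth uw) = worker_proposing"
    using unique stable_worker_proposing stable_if_report_stable_truthful[OF report_stable_DA] by blast
  moreover assume "\<not> ?thesis"
  ultimately have improver: "wutil uw worker_proposing j < wutil uw ?\<nu> j"
    by simp
  obtain i y where y: "wutil uw ?\<nu> y \<le> wutil uw worker_proposing y"
    "futil uf ?\<nu> i < uf i y" "wutil uw ?\<nu> y < uw i y"
    using blocking_lemma[OF is_matching_DA improver] by blast
  then have "y \<noteq> j"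
    using improver by auto
  then show False
    using report_stable_truthful_no_blocking[OF report_stable_DA, of "(worker_truth uw)(j := L)" y i] y
    by simp
qed

section \<open>Truthful reporting is undominated\<close>

lemma partner_if_futil_eq:
  assumes matching: "is_matching \<mu>" and eq: "futil uf \<mu> i = uf i j"
  shows "\<mu> j = Some i"
proof -
  obtain w where w: "\<mu> w = Some i"
    using eq futil_unmatched[of \<mu> i uf] firm_pos[of i j] by force
  with eq futil_Some[OF matching w] have "w = j"
    by (simp add: firm_util_eq_iff)
  with w show ?thesis
    by simp
qed

lemma report_stable_singleton_reports:
  assumes st: "report_stable uf (\<sigma>(j := X)) \<mu>"
  shows "report_stable uf ((singleton_reports \<mu>)(j := X)) \<mu>"
proof -
  have matching: "is_matching \<mu>"
    using st by (simp add: report_stable_def)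
  have "i \<in> set (((singleton_reports \<mu>)(j := X)) w)" if "\<mu> w = Some i" for w i
    using report_stable_acceptable[OF st that] that by (cases "w = j") (simp_all add: set_singleton_reports)
  moreover have "\<exists>i'. \<mu> w = Some i' \<and> rank (((singleton_reports \<mu>)(j := X)) w) i'
      < rank (((singleton_reports \<mu>)(j := X)) w) i"
    if block: "futil uf \<mu> i < uf i w" and i_in: "i \<in> set (((singleton_reports \<mu>)(j := X)) w)" for i w
  proof (cases "w = j")
    case True
    with i_in report_stable_no_blocking[OF st block] show ?thesis
      by simp
  next
    case False
    with i_in have "\<mu> w = Some i"
      by (simp add: set_singleton_reports)
    with block futil_Some[OF matching] show ?thesis
      by simp
  qed
  ultimately show ?thesis
    using matching unfolding report_stable_def by blast
qed

lemma singleton_reports_partner: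
  assumes "report_stable uf ((singleton_reports \<mu>)(j := X)) \<rho>" "\<rho> w = Some i" "w \<noteq> j"
  shows "\<mu> w = Some i"
  using report_stable_acceptable[OF assms(1,2)] assms(3) by (simp add: set_singleton_reports)

lemma DA_singleton_reports_keeps_partner:
  assumes st: "report_stable uf (\<sigma>(j := X)) \<mu>" and h: "\<mu> j = Some h"
  shows "DA (firm_truth uf) ((singleton_reports \<mu>)(j := X)) j = Some h"
proof -
  let ?\<rho> = "DA (firm_truth uf) ((singleton_reports \<mu>)(j := X))"
  have matching: "is_matching \<mu>"
    using st by (simp add: report_stable_def)
  have "futil uf \<mu> h \<le> futil uf ?\<rho> h"
    by (rule DA_firm_optimal[OF report_stable_singleton_reports[OF st]])
  then have "0 < futil uf ?\<rho> h"
    using futil_Some[OF matching h] firm_pos[of h j] by simp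
  then obtain w where w: "?\<rho> w = Some h"
    using futil_unmatched[of ?\<rho> h uf] by force
  have "w = j"
  proof (rule ccontr)
    assume "w \<noteq> j"
    then have "\<mu> w = Some h"
      using singleton_reports_partner[OF report_stable_DA w] by blast
    with h matching \<open>w \<noteq> j\<close> show False
      unfolding is_matching_def by blast
  qed
  with w show ?thesis
    by simp
qed

text \<open>Any firm that \<open>j\<close> prefers to his partner in \<open>\<mu>\<close> holds in \<open>\<mu>\<close> a worker it prefers to
  \<open>j\<close>; that worker would be left single and block.\<close>

lemma DA_singleton_reports_no_gain:
  assumes st: "report_stable uf (\<sigma>(j := worker_truth uw j)) \<mu>"
    and gain: "wutil uw \<mu> j \<le> wutil uw (DA (firm_truth uf) ((singleton_reports \<mu>)(j := Y))) j"
  shows "DA (firm_truth uf) ((singleton_reports \<mu>)(j := Y)) j = \<mu> j"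
proof (rule ccontr)
  let ?\<rho> = "DA (firm_truth uf) ((singleton_reports \<mu>)(j := Y))"
  have \<rho>_st: "report_stable uf ((singleton_reports \<mu>)(j := Y)) ?\<rho>"
    by (rule report_stable_DA)
  have matching: "is_matching \<mu>"
    using st by (simp add: report_stable_def)
  assume differ: "?\<rho> j \<noteq> \<mu> j"
  obtain x where x: "?\<rho> j = Some x"
  proof (cases "?\<rho> j")
    case None
    then have "\<mu> j = None"
      using gain worker_pos[of "the (\<mu> j)" j] by (cases "\<mu> j") (auto simp: wutil_def)
    with None differ show ?thesis
      by simp
  qed
  have "wutil uw \<mu> j < uw x j"
    using gain x differ by (intro wutil_less_if_le) (simp_all add: wutil_def)
  then have "\<not> futil uf \<mu> x < uf x j"
    using report_stable_truthful_no_blocking[OF st, of j x] by simp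
  then obtain w where w: "\<mu> w = Some x" "\<not> uf x w < uf x j"
    unfolding futil_less_iff[OF matching] by blast
  have "w \<noteq> j"
    using w x differ by auto
  then have "uf x j \<noteq> uf x w"
    by (simp add: firm_util_eq_iff)
  moreover have "futil uf ?\<rho> x = uf x j"
    by (rule futil_Some[OF is_matching_DA x])
  ultimately have "futil uf ?\<rho> x < uf x w"
    using w(2) by linarith
  moreover have "x \<in> set (((singleton_reports \<mu>)(j := Y)) w)"
    using w \<open>w \<noteq> j\<close> by (simp add: set_singleton_reports)
  ultimately obtain i where i: "?\<rho> w = Some i"
    using report_stable_no_blocking[OF \<rho>_st] by blast
  then have "i = x"
    using singleton_reports_partner[OF \<rho>_st i \<open>w \<noteq> j\<close>] w by simp
  with i x \<open>w \<noteq> j\<close> show False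
    using is_matching_DA[of "firm_truth uf" "(singleton_reports \<mu>)(j := Y)"]
    unfolding is_matching_def by blast
qed

lemma DA_singleton_truthful_keeps_partner:
  assumes matching: "is_matching \<mu>" and g: "\<mu> j = Some g"
    and no_gain: "wutil uw (DA (firm_truth uf) ((singleton_reports \<mu>)(j := worker_truth uw j))) j \<le> uw g j"
  shows "DA (firm_truth uf) ((singleton_reports \<mu>)(j := worker_truth uw j)) j = Some g"
proof (rule ccontr)
  let ?\<rho> = "DA (firm_truth uf) ((singleton_reports \<mu>)(j := worker_truth uw j))"
  have \<rho>_st: "report_stable uf ((singleton_reports \<mu>)(j := worker_truth uw j)) ?\<rho>"
    by (rule report_stable_DA)
  assume differ: "?\<rho> j \<noteq> Some g"
  have "wutil uw ?\<rho> j < uw g j"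
    using no_gain differ by (rule wutil_less_if_le)
  moreover have "?\<rho> w \<noteq> Some g" for w
  proof (cases "w = j")
    case False
    show ?thesis
    proof
      assume "?\<rho> w = Some g"
      then have "\<mu> w = Some g"
        using singleton_reports_partner[OF \<rho>_st _ False] by blast
      with g False matching show False
        unfolding is_matching_def by blast
    qed
  qed (use differ in simp)
  then have "futil uf ?\<rho> g < uf g j"
    using futil_unmatched[of ?\<rho> g uf] firm_pos[of g j] by simp
  ultimately show False
    using report_stable_truthful_no_blocking[OF \<rho>_st] by simp
qed

lemma report_stable_transfer:
  assumes st: "report_stable uf (\<sigma>(j := X)) \<mu>"
    and same: "DA (firm_truth uf) ((singleton_reports \<mu>)(j := Y)) j = \<mu> j"
  shows "report_stable uf (\<sigma>(j := Y)) \<mu>"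
proof -
  let ?\<rho> = "DA (firm_truth uf) ((singleton_reports \<mu>)(j := Y))"
  have \<rho>_st: "report_stable uf ((singleton_reports \<mu>)(j := Y)) ?\<rho>"
    by (rule report_stable_DA)
  have matching: "is_matching \<mu>"
    using st by (simp add: report_stable_def)
  have partners: "\<mu> w = Some i" if "?\<rho> w = Some i" for w i
    using singleton_reports_partner[OF \<rho>_st that] same that by (cases "w = j") auto
  have "i \<in> set ((\<sigma>(j := Y)) w)" if "\<mu> w = Some i" for w i
  proof (cases "w = j")
    case True
    then show ?thesis
      using report_stable_acceptable[OF \<rho>_st, of j i] same that by simp
  next
    case False
    then show ?thesis
      using report_stable_acceptable[OF st that] by simp
  qed
  moreover have "\<exists>i'. \<mu> w = Some i' \<and> rank ((\<sigma>(j := Y)) w) i' < rank ((\<sigma>(j := Y)) w) i"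
    if block: "futil uf \<mu> i < uf i w" and i_in: "i \<in> set ((\<sigma>(j := Y)) w)" for i w
  proof (cases "w = j")
    case True
    have "futil uf ?\<rho> i < uf i j"
      using block True partners
      unfolding futil_less_iff[OF matching] futil_less_iff[OF is_matching_DA] by blast
    then obtain i' where "?\<rho> j = Some i'" "rank Y i' < rank Y i"
      using report_stable_no_blocking[OF \<rho>_st] i_in True by fastforce
    moreover from this(1) have "\<mu> j = Some i'"
      using same by simp
    ultimately show ?thesis
      using True by simp
  next
    case False
    with i_in report_stable_no_blocking[OF st block] show ?thesis
      by simp
  qed
  ultimately show ?thesis
    using matching unfolding report_stable_def by blast
qed

lemma truthful_stable_for_dominating_report:
  assumes dom: "\<And>\<sigma>. valid_profile \<sigma> \<Longrightarrow> wutil uw (DA (firm_truth uf) (\<sigma>(j := worker_truth uw j))) j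
      \<le> wutil uw (DA (firm_truth uf) (\<sigma>(j := L))) j"
    and st: "report_stable uf (\<sigma>(j := worker_truth uw j)) \<mu>"
  shows "report_stable uf (\<sigma>(j := L)) \<mu>"
proof (rule report_stable_transfer[OF st DA_singleton_reports_no_gain[OF st]])
  show "wutil uw \<mu> j \<le> wutil uw (DA (firm_truth uf) ((singleton_reports \<mu>)(j := L))) j"
  proof (cases "\<mu> j")
    case None
    then show ?thesis
      using wutil_nonneg by (simp add: wutil_def)
  next
    case (Some h)
    then have "wutil uw \<mu> j
        = wutil uw (DA (firm_truth uf) ((singleton_reports \<mu>)(j := worker_truth uw j))) j"
      using DA_singleton_reports_keeps_partner[OF st Some] by (simp add: wutil_def)
    also have "\<dots> \<le> wutil uw (DA (firm_truth uf) ((singleton_reports \<mu>)(j := L))) j"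
      by (rule dom[OF valid_profile_singleton_reports])
    finally show ?thesis .
  qed
qed

lemma dominating_stable_for_truthful_report:
  assumes dom: "\<And>\<sigma>. valid_profile \<sigma> \<Longrightarrow> wutil uw (DA (firm_truth uf) (\<sigma>(j := worker_truth uw j))) j
      \<le> wutil uw (DA (firm_truth uf) (\<sigma>(j := L))) j"
    and st: "report_stable uf (\<sigma>(j := L)) \<mu>" and g: "\<mu> j = Some g"
  shows "report_stable uf (\<sigma>(j := worker_truth uw j)) \<mu>"
proof (rule report_stable_transfer[OF st])
  have "DA (firm_truth uf) ((singleton_reports \<mu>)(j := L)) j = Some g"
    by (rule DA_singleton_reports_keeps_partner[OF st g])
  then have "wutil uw (DA (firm_truth uf) ((singleton_reports \<mu>)(j := worker_truth uw j))) j \<le> uw g j"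
    using dom[OF valid_profile_singleton_reports, of \<mu>] by (simp add: wutil_def)
  moreover have "is_matching \<mu>"
    using st by (simp add: report_stable_def)
  ultimately show "DA (firm_truth uf) ((singleton_reports \<mu>)(j := worker_truth uw j)) j = \<mu> j"
    using DA_singleton_truthful_keeps_partner g by simp
qed

lemma truthful_report_undominated:
  assumes dom: "\<And>\<sigma>. valid_profile \<sigma> \<Longrightarrow> wutil uw (DA (firm_truth uf) (\<sigma>(j := worker_truth uw j))) j
      \<le> wutil uw (DA (firm_truth uf) (\<sigma>(j := L))) j"
  shows "wutil uw (DA (firm_truth uf) (\<sigma>0(j := L))) j
    \<le> wutil uw (DA (firm_truth uf) (\<sigma>0(j := worker_truth uw j))) j"
proof (rule ccontr)
  define \<nu>T where "\<nu>T = DA (firm_truth uf) (\<sigma>0(j := worker_truth uw j))"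
  define \<nu>L where "\<nu>L = DA (firm_truth uf) (\<sigma>0(j := L))"
  assume "\<not> ?thesis"
  then have gain: "wutil uw \<nu>T j < wutil uw \<nu>L j"
    by (simp add: \<nu>T_def \<nu>L_def)
  have T_st: "report_stable uf (\<sigma>0(j := worker_truth uw j)) \<nu>T"
    and L_st: "report_stable uf (\<sigma>0(j := L)) \<nu>L"
    unfolding \<nu>T_def \<nu>L_def by (rule report_stable_DA)+
  obtain g where g: "\<nu>L j = Some g"
    using gain wutil_nonneg[of \<nu>T j] by (cases "\<nu>L j") (auto simp: wutil_def)
  have "futil uf \<nu>T g \<le> futil uf \<nu>L g"
    unfolding \<nu>L_def by (rule DA_firm_optimal[OF truthful_stable_for_dominating_report[OF dom T_st]])
  moreover have "futil uf \<nu>L g \<le> futil uf \<nu>T g"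
    unfolding \<nu>T_def by (rule DA_firm_optimal[OF dominating_stable_for_truthful_report[OF dom L_st g]])
  moreover have "futil uf \<nu>L g = uf g j"
    using futil_Some[of \<nu>L j g uf] g L_st by (simp add: report_stable_def)
  ultimately have "\<nu>T j = Some g"
    using partner_if_futil_eq T_st by (simp add: report_stable_def)
  with g gain show False
    by (simp add: wutil_def)
qed

end

theorem proposition0:
  fixes uf :: "'th::finite \<Rightarrow> 'f::finite \<Rightarrow> 'w::finite \<Rightarrow> real"
    and uw :: "'f \<Rightarrow> 'w \<Rightarrow> real"
    and Psi :: "'th \<Rightarrow> real"
  assumes prior_pos: "\<forall>th. Psi th > 0"
    and prior_sum: "(\<Sum>th\<in>UNIV. Psi th) = 1"
    and firm_pos: "\<forall>th i j. uf th i j > 0"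
    and worker_pos: "\<forall>i j. uw i j > 0"
    and firm_strict: "\<forall>th i. inj (uf th i)"
    and worker_strict: "\<forall>j. inj (\<lambda>i. uw i j)"
    and unique_stable: "\<forall>th. \<exists>!\<mu>. stable (uf th) uw \<mu>"
  shows "\<exists>\<sigma>. is_BNE uf uw Psi \<sigma>
            \<and> (\<forall>j. \<not> weakly_dominated uf uw j (\<sigma> j))
            \<and> (\<forall>th. stable (uf th) uw (outcome uf \<sigma> th))"
proof (intro exI conjI allI notI)
  have market: "market (uf th) uw" for th
    using firm_pos worker_pos firm_strict worker_strict by (simp add: market_def)
  show "stable (uf th) uw (outcome uf (worker_truth uw) th)" for th
    unfolding outcome_def
    using market.stable_if_report_stable_truthful[OF market market.report_stable_DA[OF market]] .
  have optimal: "wutil uw (outcome uf ((worker_truth uw)(j := L)) th) j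
      \<le> wutil uw (outcome uf (worker_truth uw) th) j" for j L th
    unfolding outcome_def using market.truthful_report_optimal[OF market] unique_stable by blast
  show "is_BNE uf uw Psi (worker_truth uw)"
    unfolding is_BNE_def valid_profile_def exp_util_def
    using market.distinct_worker_truth[OF market] prior_pos optimal
    by (simp add: sum_mono mult_left_mono less_imp_le)
  fix j
  assume "weakly_dominated uf uw j (worker_truth uw j)"
  then obtain L th \<sigma> where dom: "\<And>th \<sigma>. valid_profile \<sigma> \<Longrightarrow>
      wutil uw (outcome uf (\<sigma>(j := worker_truth uw j)) th) j \<le> wutil uw (outcome uf (\<sigma>(j := L)) th) j"
    and strict: "wutil uw (outcome uf (\<sigma>(j := worker_truth uw j)) th) j < wutil uw (outcome uf (\<sigma>(j := L)) th) j"
    unfolding weakly_dominated_def by blast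
  from market.truthful_report_undominated[OF market dom[of _ th, unfolded outcome_def]] strict
  show False
    unfolding outcome_def by (simp add: not_le[symmetric])
qed

end
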